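(* Let $\varepsilon>0$, let $V$ be a probability space, and let $f\colon V\times V\to[0,\infty)$ be a measurable symmetric function. Then there exists a measurable partition $\mathcal P$ of $V$ into at most $2^{32\,\mathbb E f/\varepsilon^2}$ parts such that $$\big\|(f-f_{\mathcal P})\,1_{f_{\mathcal P}\le 1}\big\|_\square\le\varepsilon.$$
   Context: Symmetric means $f(x,y)=f(y,x)$; $\mathbb E f=\mathbb E_{x,y\in V}f(x,y)$ with $x,y$ independent according to the probability measure $\mu$ of $V$. For a partition $\mathcal P$ of $V$, $f_{\mathcal P}$ is defined by $f_{\mathcal P}(x,y)=\frac{1}{\mu(A)\mu(B)}\int_{A\times B}f$ for $(x,y)\in A\times B$, where $A,B$ are parts of $\mathcal P$ (zero-measure parts are ignored). $(f-f_{\mathcal P})1_{f_{\mathcal P}\le1}$ denotes the function equal to $f(x,y)-f_{\mathcal P}(x,y)$ where $f_{\mathcal P}(x,y)\le1$ and $0$ elsewhere. For $h\colon V_1\times V_2\to\mathbb R$ on probability spaces $V_1,V_2$, the cut norm is $\|h\|_\square=\sup_{A\subseteq V_1,B\subseteq V_2}\left|\mathbb E_{x\in V_1,y\in V_2}h(x,y)1_A(x)1_B(y)\right|$, over measurable $A,B$. *)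

theory Defs
  imports "HOL-Probability.Probability"
begin

definition meas_partition :: "'a measure \<Rightarrow> 'a set set \<Rightarrow> bool" where
  "meas_partition M P \<longleftrightarrow> finite P \<and> P \<subseteq> sets M \<and> \<Union>P = space M \<and> {} \<notin> P
     \<and> (\<forall>A\<in>P. \<forall>B\<in>P. A \<noteq> B \<longrightarrow> A \<inter> B = {})"

definition part_of :: "'a set set \<Rightarrow> 'a \<Rightarrow> 'a set" where
  "part_of P x = (THE A. A \<in> P \<and> x \<in> A)"

definition expect2 :: "'a measure \<Rightarrow> ('a \<times> 'a \<Rightarrow> real) \<Rightarrow> ennreal" where
  "expect2 M f = (\<integral>\<^sup>+ z. ennreal (f z) \<partial>(M \<Otimes>\<^sub>M M))"

text \<open>The step function f_P (with values in [0,\<infinity>]); parts of measure zero are ignored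
  (value 0 there).\<close>
definition step_fun :: "'a measure \<Rightarrow> 'a set set \<Rightarrow> ('a \<times> 'a \<Rightarrow> real) \<Rightarrow> 'a \<times> 'a \<Rightarrow> ennreal" where
  "step_fun M P f z = (let A = part_of P (fst z); B = part_of P (snd z) in
     if emeasure M A = 0 \<or> emeasure M B = 0 then 0
     else (\<integral>\<^sup>+ w. ennreal (f w) * indicator (A \<times> B) w \<partial>(M \<Otimes>\<^sub>M M)) / (emeasure M A * emeasure M B))"

definition trunc_err :: "'a measure \<Rightarrow> 'a set set \<Rightarrow> ('a \<times> 'a \<Rightarrow> real) \<Rightarrow> 'a \<times> 'a \<Rightarrow> real" where
  "trunc_err M P f z = (if step_fun M P f z \<le> 1 then f z - enn2real (step_fun M P f z) else 0)"

definition cut_norm :: "'a measure \<Rightarrow> ('a \<times> 'a \<Rightarrow> real) \<Rightarrow> real" where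
  "cut_norm M h = (SUP AB \<in> sets M \<times> sets M.
     \<bar>\<integral> z. h z * indicator (fst AB) (fst z) * indicator (snd AB) (snd z) \<partial>(M \<Otimes>\<^sub>M M)\<bar>)"

end

theory Submission
  imports Defs
begin

text \<open>
  An energy increment with a truncated square.  Measure a partition \<open>P\<close> by its energy
  \<open>\<integral> \<psi>(f\<^sub>P)\<close>, where \<open>\<psi>(t) = t\<^sup>2\<close> for \<open>t \<le> 2\<close> and \<open>\<psi>\<close> continues linearly with slope 4 beyond.
  Since \<open>\<psi>(t) \<le> 4t\<close> and \<open>f\<^sub>P\<close> is the conditional expectation of \<open>f\<close>, the energy never exceeds
  \<open>4 \<bbbE> f\<close>, even when \<open>f\<close> is not square integrable.  If the truncated error has cut norm
  \<open>> \<epsilon>\<close>, witnessed by sets \<open>S, T\<close>, then refining \<open>P\<close> by \<open>S\<close> and by \<open>T\<close> at most quadruples the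
  number of parts and raises the energy by at least \<open>3\<epsilon>\<^sup>2/4\<close>: the gain is the integral of the
  Bregman divergence of \<open>\<psi>\<close>, which is quadratic where \<open>f\<^sub>P \<le> 1\<close>, i.e. exactly where the
  truncated error lives.  Hence at most \<open>16 \<bbbE> f / (3\<epsilon>\<^sup>2)\<close> refinements are needed, leaving at
  most \<open>4\<^bsup>16 \<bbbE> f / (3\<epsilon>\<^sup>2)\<^esup> \<le> 2\<^bsup>32 \<bbbE> f / \<epsilon>\<^sup>2\<^esup>\<close> parts.
\<close>

section \<open>Partitions\<close>

lemma part_of_eq:
  assumes "meas_partition M P" "A \<in> P" "x \<in> A"
  shows "part_of P x = A"
  unfolding part_of_def
proof (rule the_equality)
  show "A \<in> P \<and> x \<in> A" using assms by auto
  fix B assume "B \<in> P \<and> x \<in> B"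
  then show "B = A" using assms unfolding meas_partition_def by blast
qed

lemma part_of_mem:
  assumes "meas_partition M P" "x \<in> space M"
  shows "part_of P x \<in> P" "x \<in> part_of P x"
proof -
  obtain A where "A \<in> P" "x \<in> A" using assms unfolding meas_partition_def by blast
  then show "part_of P x \<in> P" "x \<in> part_of P x" using part_of_eq[OF assms(1)] by simp_all
qed

lemma meas_partition_space: "prob_space M \<Longrightarrow> meas_partition M {space M}"
  unfolding meas_partition_def using prob_space.not_empty by auto

definition refines :: "'a set set \<Rightarrow> 'a set set \<Rightarrow> bool" where
  "refines Q P \<longleftrightarrow> (\<forall>A\<in>Q. \<exists>B\<in>P. A \<subseteq> B)"

lemma refines_trans: "refines R Q \<Longrightarrow> refines Q P \<Longrightarrow> refines R P"
  unfolding refines_def by (meson order_trans)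

definition split_by :: "'a set set \<Rightarrow> 'a set \<Rightarrow> 'a set set" where
  "split_by P S = ((\<lambda>A. A \<inter> S) ` P \<union> (\<lambda>A. A - S) ` P) - {{}}"

lemma split_by_cases:
  assumes "A \<in> split_by P S"
  obtains A0 where "A0 \<in> P" "A = A0 \<inter> S \<or> A = A0 - S"
  using assms unfolding split_by_def by blast

lemma refines_split_by: "refines (split_by P S) P"
  unfolding refines_def by (blast elim: split_by_cases)

lemma split_by_separates: "A \<in> split_by P S \<Longrightarrow> A \<subseteq> S \<or> A \<inter> S = {}"
  by (blast elim: split_by_cases)

lemma card_split_by_le:
  assumes "finite P"
  shows "card (split_by P S) \<le> 2 * card P"
proof -
  have "card (split_by P S) \<le> card ((\<lambda>A. A \<inter> S) ` P \<union> (\<lambda>A. A - S) ` P)"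
    unfolding split_by_def using assms by (intro card_mono) auto
  also have "\<dots> \<le> card ((\<lambda>A. A \<inter> S) ` P) + card ((\<lambda>A. A - S) ` P)"
    by (rule card_Un_le)
  also have "\<dots> \<le> card P + card P"
    by (intro add_mono card_image_le assms)
  finally show ?thesis by simp
qed

lemma meas_partition_split_by:
  assumes P: "meas_partition M P" and S: "S \<in> sets M"
  shows "meas_partition M (split_by P S)"
proof -
  have "\<Union>(split_by P S) = space M"
  proof
    show "\<Union>(split_by P S) \<subseteq> space M"
      using P by (auto simp: meas_partition_def elim!: split_by_cases)
    show "space M \<subseteq> \<Union>(split_by P S)"
    proof
      fix x assume "x \<in> space M"
      then obtain A where "A \<in> P" "x \<in> A" using P unfolding meas_partition_def by blast
      then have "x \<in> A \<inter> S \<or> x \<in> A - S" "A \<inter> S \<in> split_by P S \<or> x \<notin> S" "A - S \<in> split_by P S \<or> x \<in> S"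
        unfolding split_by_def by auto
      then show "x \<in> \<Union>(split_by P S)" by blast
    qed
  qed
  moreover have "A \<inter> B = {}" if "A \<in> split_by P S" "B \<in> split_by P S" "A \<noteq> B" for A B
    using that P unfolding meas_partition_def by (elim split_by_cases) blast+
  moreover have "finite (split_by P S)" "split_by P S \<subseteq> sets M" "{} \<notin> split_by P S"
    using P S unfolding meas_partition_def split_by_def by auto
  ultimately show ?thesis unfolding meas_partition_def by blast
qed

definition cellwise_const :: "'a set set \<Rightarrow> ('a \<times> 'a \<Rightarrow> 'b) \<Rightarrow> bool" where
  "cellwise_const P g \<longleftrightarrow> (\<forall>A\<in>P. \<forall>B\<in>P. \<forall>z\<in>A \<times> B. \<forall>w\<in>A \<times> B. g z = g w)"

lemma cellwise_constD:
  "cellwise_const P g \<Longrightarrow> A \<in> P \<Longrightarrow> B \<in> P \<Longrightarrow> z \<in> A \<times> B \<Longrightarrow> w \<in> A \<times> B \<Longrightarrow> g z = g w"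
  unfolding cellwise_const_def by blast

lemma cellwise_const_const: "cellwise_const P (\<lambda>z. c)"
  unfolding cellwise_const_def by simp

lemma cellwise_const_comp2:
  "cellwise_const P a \<Longrightarrow> cellwise_const P b \<Longrightarrow> cellwise_const P (\<lambda>z. h (a z) (b z))"
  unfolding cellwise_const_def by metis

lemma cellwise_const_comp3:
  assumes "cellwise_const P a" "cellwise_const P b" "cellwise_const P c"
  shows "cellwise_const P (\<lambda>z. h (a z) (b z) (c z))"
  using cellwise_const_comp2[OF assms(1) cellwise_const_comp2[OF assms(2,3), of Pair],
      of "\<lambda>u p. h u (fst p) (snd p)"]
  by simp

lemma cellwise_const_comp: "cellwise_const P g \<Longrightarrow> cellwise_const P (\<lambda>z. h (g z))"
  using cellwise_const_comp2[of P g g "\<lambda>u v. h u"] by simp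

lemma cellwise_const_refines:
  assumes "refines Q P" "cellwise_const P g"
  shows "cellwise_const Q g"
  unfolding cellwise_const_def
proof (intro ballI)
  fix A B z w assume "A \<in> Q" "B \<in> Q" "z \<in> A \<times> B" "w \<in> A \<times> B"
  moreover obtain A' B' where "A' \<in> P" "B' \<in> P" "A \<subseteq> A'" "B \<subseteq> B'"
    using assms(1) \<open>A \<in> Q\<close> \<open>B \<in> Q\<close> unfolding refines_def by meson
  ultimately show "g z = g w" using cellwise_constD[OF assms(2)] by blast
qed

lemma cellwise_const_part_of:
  assumes "meas_partition M P"
  shows "cellwise_const P (\<lambda>z. h (part_of P (fst z)) (part_of P (snd z)))"
  unfolding cellwise_const_def using part_of_eq[OF assms] by (auto simp: mem_Times_iff)

lemma cellwise_const_indicator_Times: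
  assumes "\<forall>A\<in>Q. A \<subseteq> S \<or> A \<inter> S = {}" "\<forall>A\<in>Q. A \<subseteq> T \<or> A \<inter> T = {}"
  shows "cellwise_const Q (indicator (S \<times> T))"
  unfolding cellwise_const_def
proof (intro ballI)
  fix A B z w assume "A \<in> Q" "B \<in> Q" "z \<in> A \<times> B" "w \<in> A \<times> B"
  then have "fst z \<in> S \<longleftrightarrow> fst w \<in> S" "snd z \<in> T \<longleftrightarrow> snd w \<in> T"
    using assms by (auto simp: mem_Times_iff)
  then show "indicator (S \<times> T) z = (indicator (S \<times> T) w :: 'b)"
    by (simp add: indicator_def mem_Times_iff)
qed

lemma split_by_rectangle:
  assumes P: "meas_partition M P" and S: "S \<in> sets M" and T: "T \<in> sets M"
  defines "Q \<equiv> split_by (split_by P S) T"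
  shows "meas_partition M Q" "card Q \<le> 4 * card P" "refines Q P"
    and "cellwise_const Q (indicator (S \<times> T))"
proof -
  have Q1: "meas_partition M (split_by P S)" by (rule meas_partition_split_by[OF P S])
  then show "meas_partition M Q" unfolding Q_def by (rule meas_partition_split_by[OF _ T])
  have "card Q \<le> 2 * card (split_by P S)" "card (split_by P S) \<le> 2 * card P"
    using P Q1 unfolding Q_def meas_partition_def by (simp_all add: card_split_by_le)
  then show "card Q \<le> 4 * card P" by simp
  have QQ1: "refines Q (split_by P S)" unfolding Q_def by (rule refines_split_by)
  then show "refines Q P" by (rule refines_trans[OF _ refines_split_by])
  have "\<forall>A\<in>Q. A \<subseteq> S \<or> A \<inter> S = {}"
    using QQ1 split_by_separates[of _ P S] unfolding refines_def by blast
  moreover have "\<forall>A\<in>Q. A \<subseteq> T \<or> A \<inter> T = {}"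
    unfolding Q_def using split_by_separates by blast
  ultimately show "cellwise_const Q (indicator (S \<times> T))"
    by (rule cellwise_const_indicator_Times)
qed

lemma cell_in_sets:
  assumes "meas_partition M P" "A \<in> P" "B \<in> P"
  shows "A \<times> B \<in> sets (M \<Otimes>\<^sub>M M)"
proof -
  have "A \<in> sets M" "B \<in> sets M" using assms unfolding meas_partition_def by blast+
  then show ?thesis by simp
qed

lemma disjoint_family_on_cells:
  assumes "meas_partition M P"
  shows "disjoint_family_on (\<lambda>AB. fst AB \<times> snd AB) (P \<times> P)"
  unfolding disjoint_family_on_def
proof (intro ballI impI)
  fix AB AB' assume AB: "AB \<in> P \<times> P" "AB' \<in> P \<times> P" "AB \<noteq> AB'"
  then have "fst AB \<noteq> fst AB' \<or> snd AB \<noteq> snd AB'" by (simp add: prod_eq_iff)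
  moreover have "fst AB \<in> P" "fst AB' \<in> P" "snd AB \<in> P" "snd AB' \<in> P"
    using AB by (simp_all add: mem_Times_iff)
  ultimately have "fst AB \<inter> fst AB' = {} \<or> snd AB \<inter> snd AB' = {}"
    using assms unfolding meas_partition_def by blast
  then show "(fst AB \<times> snd AB) \<inter> (fst AB' \<times> snd AB') = {}" by blast
qed

lemma cellwise_const_eq_sum:
  fixes g :: "'a \<times> 'a \<Rightarrow> real"
  assumes P: "meas_partition M P" and g: "cellwise_const P g" and z: "z \<in> space M \<times> space M"
  shows "g z = (\<Sum>AB\<in>P \<times> P. g (SOME w. w \<in> fst AB \<times> snd AB) * indicator (fst AB \<times> snd AB) z)"
proof -
  define C where "C = (part_of P (fst z), part_of P (snd z))"
  have C: "C \<in> P \<times> P" "z \<in> fst C \<times> snd C"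
    using part_of_mem[OF P] z unfolding C_def by (auto simp: mem_Times_iff)
  from C(2) have "(SOME w. w \<in> fst C \<times> snd C) \<in> fst C \<times> snd C" by (rule someI)
  then have "g z = g (SOME w. w \<in> fst C \<times> snd C)"
    using C by (intro cellwise_constD[OF g]) auto
  also have "\<dots> = (\<Sum>AB\<in>P \<times> P. g (SOME w. w \<in> fst AB \<times> snd AB) * indicator (fst AB \<times> snd AB) z)"
    using P unfolding meas_partition_def
    by (intro sum_indicator_disjoint_family[symmetric, OF disjoint_family_on_cells[OF P] C(2) _ C(1)])
      simp
  finally show ?thesis .
qed

locale prob_square = prob_space M for M :: "'a measure"

sublocale prob_square \<subseteq> N: prob_space "M \<Otimes>\<^sub>M M"
  by (rule prob_space_pair) (rule prob_space_axioms)+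

context prob_square
begin

abbreviation "N \<equiv> M \<Otimes>\<^sub>M M"

lemma measure_Times:
  assumes "A \<in> sets M" "B \<in> sets M"
  shows "measure N (A \<times> B) = measure M A * measure M B"
proof -
  have "ennreal (measure N (A \<times> B)) = ennreal (measure M A * measure M B)"
    using emeasure_pair_measure_Times[OF assms]
    by (simp add: N.emeasure_eq_measure emeasure_eq_measure ennreal_mult)
  then show ?thesis by simp
qed

lemma cellwise_const_mult_integral:
  fixes g h :: "'a \<times> 'a \<Rightarrow> real"
  assumes P: "meas_partition M P" and g: "cellwise_const P g" and h: "integrable N h"
  shows "integrable N (\<lambda>z. g z * h z)"
    and "(\<integral>z. g z * h z \<partial>N) =
      (\<Sum>AB\<in>P \<times> P. g (SOME w. w \<in> fst AB \<times> snd AB) * (\<integral>z. h z * indicator (fst AB \<times> snd AB) z \<partial>N))"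
proof -
  let ?c = "\<lambda>AB. g (SOME w. w \<in> fst AB \<times> snd AB)"
  let ?s = "\<lambda>z. \<Sum>AB\<in>P \<times> P. ?c AB * (h z * indicator (fst AB \<times> snd AB) z)"
  have eq: "g z * h z = ?s z" if "z \<in> space N" for z
  proof -
    have "g z * h z = (\<Sum>AB\<in>P \<times> P. ?c AB * indicator (fst AB \<times> snd AB) z) * h z"
      using cellwise_const_eq_sum[OF P g] that by (simp add: space_pair_measure)
    also have "\<dots> = ?s z"
      by (simp add: sum_distrib_right mult.assoc mult.commute[of "h z"])
    finally show ?thesis .
  qed
  have cell: "integrable N (\<lambda>z. ?c AB * (h z * indicator (fst AB \<times> snd AB) z))" if "AB \<in> P \<times> P" for AB
    using that cell_in_sets[OF P] h by (intro integrable_mult_right integrable_real_mult_indicator) auto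
  have "integrable N ?s"
    by (rule Bochner_Integration.integrable_sum) (rule cell)
  moreover have "integrable N (\<lambda>z. g z * h z) = integrable N ?s"
    by (rule Bochner_Integration.integrable_cong[OF refl eq])
  ultimately show "integrable N (\<lambda>z. g z * h z)" by simp
  have "(\<integral>z. g z * h z \<partial>N) = (\<integral>z. ?s z \<partial>N)"
    by (rule Bochner_Integration.integral_cong[OF refl eq])
  also have "\<dots> = (\<Sum>AB\<in>P \<times> P. \<integral>z. ?c AB * (h z * indicator (fst AB \<times> snd AB) z) \<partial>N)"
    by (rule Bochner_Integration.integral_sum) (rule cell)
  finally show "(\<integral>z. g z * h z \<partial>N) =
      (\<Sum>AB\<in>P \<times> P. ?c AB * (\<integral>z. h z * indicator (fst AB \<times> snd AB) z \<partial>N))"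
    by simp
qed

lemma integrable_cellwise_const:
  fixes g :: "'a \<times> 'a \<Rightarrow> real"
  assumes "meas_partition M P" "cellwise_const P g"
  shows "integrable N g"
  using cellwise_const_mult_integral(1)[OF assms N.integrable_const[of 1]] by simp

end

section \<open>The step function as a conditional expectation\<close>

locale integrable_kernel = prob_square M for M :: "'a measure" +
  fixes f :: "'a \<times> 'a \<Rightarrow> real"
  assumes integrable_f: "integrable (M \<Otimes>\<^sub>M M) f"
    and f_nonneg: "\<And>z. z \<in> space (M \<Otimes>\<^sub>M M) \<Longrightarrow> 0 \<le> f z"
begin

definition avg_on :: "'a set \<Rightarrow> 'a set \<Rightarrow> real" where
  "avg_on A B = (if measure M A = 0 \<or> measure M B = 0 then 0
     else (\<integral>w. f w * indicator (A \<times> B) w \<partial>N) / (measure M A * measure M B))"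

text \<open>\<open>cond_exp P\<close> is the paper's \<open>f\<^sub>P\<close>: the conditional expectation of \<open>f\<close> given the cells
  \<open>A \<times> B\<close> of \<open>P \<times> P\<close>, set to 0 on null cells.\<close>

definition cond_exp :: "'a set set \<Rightarrow> 'a \<times> 'a \<Rightarrow> real" where
  "cond_exp P z = avg_on (part_of P (fst z)) (part_of P (snd z))"

lemma integral_f_indicator_nonneg: "0 \<le> (\<integral>w. f w * indicator C w \<partial>N)"
  using f_nonneg by (intro Bochner_Integration.integral_nonneg) (auto simp: indicator_def)

lemma cond_exp_nonneg: "0 \<le> cond_exp P z"
  unfolding cond_exp_def avg_on_def
  using integral_f_indicator_nonneg by (auto intro!: divide_nonneg_nonneg)

lemma cellwise_const_cond_exp: "meas_partition M P \<Longrightarrow> cellwise_const P (cond_exp P)"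
  unfolding cond_exp_def by (rule cellwise_const_part_of)

lemma integrable_cond_exp: "meas_partition M P \<Longrightarrow> integrable N (cond_exp P)"
  by (rule integrable_cellwise_const[OF _ cellwise_const_cond_exp])

lemma step_fun_eq_cond_exp: "step_fun M P f z = ennreal (cond_exp P z)"
proof -
  define A where "A = part_of P (fst z)"
  define B where "B = part_of P (snd z)"
  show ?thesis
  proof (cases "measure M A = 0 \<or> measure M B = 0")
    case True
    then show ?thesis
      unfolding step_fun_def cond_exp_def avg_on_def Let_def A_def[symmetric] B_def[symmetric]
      by (auto simp: emeasure_eq_measure)
  next
    case False
    then have "A \<in> sets M" "B \<in> sets M" using measure_notin_sets by blast+
    then have "A \<times> B \<in> sets N" by simp
    then have "integrable N (\<lambda>w. f w * indicator (A \<times> B) w)"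
      by (rule integrable_real_mult_indicator[OF _ integrable_f])
    then have "(\<integral>\<^sup>+ w. ennreal (f w) * indicator (A \<times> B) w \<partial>N) = ennreal (\<integral>w. f w * indicator (A \<times> B) w \<partial>N)"
      using f_nonneg
      by (subst nn_integral_eq_integral[symmetric]) (auto intro!: nn_integral_cong simp: indicator_def)
    moreover have "0 < measure M A" "0 < measure M B"
      using False by (simp_all add: zero_less_measure_iff)
    ultimately show ?thesis
      unfolding step_fun_def cond_exp_def avg_on_def Let_def A_def[symmetric] B_def[symmetric]
      using False integral_f_indicator_nonneg
      by (simp add: emeasure_eq_measure ennreal_mult[symmetric] divide_ennreal)
  qed
qed

lemma trunc_err_eq: "trunc_err M P f z = of_bool (cond_exp P z \<le> 1) * (f z - cond_exp P z)"
  unfolding trunc_err_def step_fun_eq_cond_exp using cond_exp_nonneg[of P z] by simp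

lemma integral_cond_exp_Times:
  assumes P: "meas_partition M P" and A: "A \<in> P" and B: "B \<in> P"
  shows "(\<integral>z. cond_exp P z * indicator (A \<times> B) z \<partial>N) = (\<integral>z. f z * indicator (A \<times> B) z \<partial>N)"
proof -
  have sets: "A \<in> sets M" "B \<in> sets M" using P A B unfolding meas_partition_def by auto
  have "(\<integral>z. cond_exp P z * indicator (A \<times> B) z \<partial>N) = (\<integral>z. avg_on A B * indicator (A \<times> B) z \<partial>N)"
    using part_of_eq[OF P A] part_of_eq[OF P B]
    by (intro Bochner_Integration.integral_cong) (auto simp: cond_exp_def indicator_def mem_Times_iff)
  also have "\<dots> = avg_on A B * (measure M A * measure M B)"
    using sets by (simp add: measure_Times)
  also have "\<dots> = (\<integral>z. f z * indicator (A \<times> B) z \<partial>N)"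
  proof (cases "measure M A = 0 \<or> measure M B = 0")
    case True
    then have "A \<times> B \<in> null_sets N"
      using sets by (intro null_setsI) (auto simp: N.emeasure_eq_measure measure_Times)
    then have "(\<integral>z. f z * indicator (A \<times> B) z \<partial>N) = 0"
      by (intro integral_eq_zero_AE) (auto elim: AE_not_in[THEN AE_mp])
    then show ?thesis using True by (simp add: avg_on_def)
  qed (simp add: avg_on_def)
  finally show ?thesis .
qed

lemma integral_mult_cond_exp:
  assumes P: "meas_partition M P" and g: "cellwise_const P g"
  shows "(\<integral>z. g z * cond_exp P z \<partial>N) = (\<integral>z. g z * f z \<partial>N)"
  unfolding cellwise_const_mult_integral(2)[OF P g integrable_cond_exp[OF P]]
    cellwise_const_mult_integral(2)[OF P g integrable_f]
  using integral_cond_exp_Times[OF P] by (intro sum.cong) auto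

end

section \<open>A truncated square\<close>

definition trunc_sq :: "real \<Rightarrow> real" where
  "trunc_sq t = (if t \<le> 2 then t\<^sup>2 else 4 * t - 4)"

definition trunc_sq_deriv :: "real \<Rightarrow> real" where
  "trunc_sq_deriv t = (if t \<le> 2 then 2 * t else 4)"

lemma trunc_sq_nonneg: "0 \<le> t \<Longrightarrow> 0 \<le> trunc_sq t"
  by (simp add: trunc_sq_def)

lemma trunc_sq_le: "0 \<le> t \<Longrightarrow> trunc_sq t \<le> 4 * t"
  by (auto simp: trunc_sq_def power2_eq_square intro: mult_right_mono[of t 4 t, simplified])

lemma trunc_sq_bregman_cases:
  "trunc_sq y - trunc_sq x - trunc_sq_deriv x * (y - x) =
     (if x \<le> 2 then if y \<le> 2 then (y - x)\<^sup>2 else (2 - x) * (2 * y - x - 2)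
      else if y \<le> 2 then (y - 2)\<^sup>2 else 0)"
  by (simp add: trunc_sq_def trunc_sq_deriv_def power2_eq_square algebra_simps)

lemma trunc_sq_bregman_nonneg: "0 \<le> trunc_sq y - trunc_sq x - trunc_sq_deriv x * (y - x)"
  unfolding trunc_sq_bregman_cases by (auto intro: mult_nonneg_nonneg)

lemma trunc_sq_bregman_ge:
  assumes "x \<le> 1" "0 < e" "e \<le> 1"
  shows "e * \<bar>y - x\<bar> - e\<^sup>2 / 4 \<le> trunc_sq y - trunc_sq x - trunc_sq_deriv x * (y - x)"
proof (cases "y \<le> 2")
  case True
  have "0 \<le> (\<bar>y - x\<bar> - e / 2)\<^sup>2" by simp
  then show ?thesis using True assms(1) unfolding trunc_sq_bregman_cases
    by (simp add: power2_eq_square algebra_simps)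
next
  case False
  have D: "trunc_sq y - trunc_sq x - trunc_sq_deriv x * (y - x) = (2 - x) * (2 * y - x - 2)"
    using False assms(1) by (simp add: trunc_sq_bregman_cases)
  have "e * \<bar>y - x\<bar> \<le> y - x" using False assms by (simp add: mult_left_le_one_le)
  also have "\<dots> \<le> 2 * y - x - 2" using False by simp
  also have "\<dots> \<le> (2 - x) * (2 * y - x - 2)" using False assms(1) by (simp add: mult_le_cancel_right1)
  finally have "e * \<bar>y - x\<bar> \<le> (2 - x) * (2 * y - x - 2)" .
  moreover have "0 \<le> e\<^sup>2" by simp
  ultimately show ?thesis unfolding D by linarith
qed

lemma trunc_sq_bregman_ge_linear:
  assumes e: "0 < e" "e \<le> 1" and G: "\<bar>G\<bar> \<le> 1" "x \<le> 1 \<or> G = 0"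
  shows "e * (G * (y - x)) - e\<^sup>2 / 4 \<le> trunc_sq y - trunc_sq x - trunc_sq_deriv x * (y - x)"
proof (cases "x \<le> 1")
  case True
  have "G * (y - x) \<le> \<bar>G\<bar> * \<bar>y - x\<bar>" by (metis abs_ge_self abs_mult)
  also have "\<dots> \<le> \<bar>y - x\<bar>" by (rule mult_left_le_one_le) (simp_all add: G(1))
  finally have "e * (G * (y - x)) \<le> e * \<bar>y - x\<bar>" using e(1) by (simp add: mult_left_mono)
  then show ?thesis using trunc_sq_bregman_ge[OF True e, of y] by linarith
next
  case False
  then have "e * (G * (y - x)) = 0" using G(2) by simp
  moreover have "0 \<le> e\<^sup>2" by simp
  ultimately show ?thesis using trunc_sq_bregman_nonneg[of y x] by linarith
qed

section \<open>Energy increment\<close>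

lemma cut_norm_gtE:
  assumes "e < cut_norm M h"
  obtains A B where "A \<in> sets M" "B \<in> sets M"
    "e < \<bar>\<integral>z. h z * indicator A (fst z) * indicator B (snd z) \<partial>(M \<Otimes>\<^sub>M M)\<bar>"
proof -
  have "\<exists>A\<in>sets M. \<exists>B\<in>sets M. e < \<bar>\<integral>z. h z * indicator A (fst z) * indicator B (snd z) \<partial>(M \<Otimes>\<^sub>M M)\<bar>"
  proof (rule ccontr)
    assume "\<not> ?thesis"
    then have "cut_norm M h \<le> e"
      unfolding cut_norm_def by (intro cSUP_least) (auto simp: not_less)
    with assms show False by simp
  qed
  then show ?thesis using that by blast
qed

lemma cut_norm_eq_0:
  assumes "\<And>z. z \<in> space (M \<Otimes>\<^sub>M M) \<Longrightarrow> h z = 0"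
  shows "cut_norm M h = 0"
proof -
  have "(\<integral>z. h z * indicator A (fst z) * indicator B (snd z) \<partial>(M \<Otimes>\<^sub>M M)) = 0" for A B
    using assms by (intro integral_eq_zero_AE) auto
  moreover have "sets M \<times> sets M \<noteq> {}" using sets.empty_sets by blast
  ultimately show ?thesis unfolding cut_norm_def by (simp add: cSUP_const)
qed

context integrable_kernel
begin

definition energy :: "'a set set \<Rightarrow> real" where
  "energy P = (\<integral>z. trunc_sq (cond_exp P z) \<partial>N)"

lemma energy_nonneg: "0 \<le> energy P"
  unfolding energy_def
  by (intro Bochner_Integration.integral_nonneg trunc_sq_nonneg cond_exp_nonneg)

lemma energy_le:
  assumes P: "meas_partition M P"
  shows "energy P \<le> 4 * (\<integral>z. f z \<partial>N)"
proof -
  have "energy P \<le> (\<integral>z. 4 * cond_exp P z \<partial>N)"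
    unfolding energy_def using cond_exp_nonneg trunc_sq_le
    by (intro Bochner_Integration.integral_mono integrable_cellwise_const[OF P]
        cellwise_const_comp[OF cellwise_const_cond_exp[OF P]]) auto
  also have "\<dots> = 4 * (\<integral>z. 1 * cond_exp P z \<partial>N)" by simp
  also have "(\<integral>z. 1 * cond_exp P z \<partial>N) = (\<integral>z. 1 * f z \<partial>N)"
    by (rule integral_mult_cond_exp[OF P cellwise_const_const])
  finally show ?thesis by simp
qed

lemma energy_diff_eq:
  assumes P: "meas_partition M P" and Q: "meas_partition M Q" and QP: "refines Q P"
  defines "x \<equiv> cond_exp P" and "y \<equiv> cond_exp Q"
  shows "energy Q - energy P =
    (\<integral>z. trunc_sq (y z) - trunc_sq (x z) - trunc_sq_deriv (x z) * (y z - x z) \<partial>N)"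
proof -
  have xP: "cellwise_const P x" and yQ: "cellwise_const Q y"
    unfolding x_def y_def by (rule cellwise_const_cond_exp[OF P], rule cellwise_const_cond_exp[OF Q])
  have dP: "cellwise_const P (\<lambda>z. trunc_sq_deriv (x z))" by (rule cellwise_const_comp[OF xP])
  then have dQ: "cellwise_const Q (\<lambda>z. trunc_sq_deriv (x z))" by (rule cellwise_const_refines[OF QP])
  have xQ: "cellwise_const Q x" by (rule cellwise_const_refines[OF QP xP])
  have int: "integrable N (\<lambda>z. h (x z) (y z))" for h :: "real \<Rightarrow> real \<Rightarrow> real"
    by (rule integrable_cellwise_const[OF Q cellwise_const_comp2[OF xQ yQ]])
  have "(\<integral>z. trunc_sq_deriv (x z) * y z \<partial>N) = (\<integral>z. trunc_sq_deriv (x z) * f z \<partial>N)"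
    unfolding y_def by (rule integral_mult_cond_exp[OF Q dQ])
  also have "\<dots> = (\<integral>z. trunc_sq_deriv (x z) * x z \<partial>N)"
    unfolding x_def by (rule integral_mult_cond_exp[OF P dP[unfolded x_def], symmetric])
  finally have "(\<integral>z. trunc_sq_deriv (x z) * (y z - x z) \<partial>N) = 0"
    using int[of "\<lambda>u v. trunc_sq_deriv u * v"] int[of "\<lambda>u v. trunc_sq_deriv u * u"]
    by (simp add: right_diff_distrib)
  moreover have "(\<integral>z. trunc_sq (y z) - trunc_sq (x z) - trunc_sq_deriv (x z) * (y z - x z) \<partial>N) =
      (\<integral>z. trunc_sq (y z) \<partial>N) - (\<integral>z. trunc_sq (x z) \<partial>N) - (\<integral>z. trunc_sq_deriv (x z) * (y z - x z) \<partial>N)"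
    using int[of "\<lambda>u v. trunc_sq v"] int[of "\<lambda>u v. trunc_sq u"]
      int[of "\<lambda>u v. trunc_sq_deriv u * (v - u)"] by simp
  ultimately show ?thesis unfolding energy_def x_def y_def by simp
qed

definition trunc_err_integral :: "'a set set \<Rightarrow> 'a set \<Rightarrow> 'a set \<Rightarrow> real" where
  "trunc_err_integral P S T = (\<integral>z. trunc_err M P f z * indicator S (fst z) * indicator T (snd z) \<partial>N)"

definition err_weight :: "'a set set \<Rightarrow> 'a set \<Rightarrow> 'a set \<Rightarrow> 'a \<times> 'a \<Rightarrow> real" where
  "err_weight P S T z = of_bool (cond_exp P z \<le> 1) * indicator (S \<times> T) z"

lemma trunc_err_integral_eq_diff:
  assumes P: "meas_partition M P" and ST: "S \<times> T \<in> sets N"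
  shows "integrable N (\<lambda>z. err_weight P S T z * f z)"
    and "integrable N (\<lambda>z. err_weight P S T z * cond_exp P z)"
    and "trunc_err_integral P S T =
      (\<integral>z. err_weight P S T z * f z \<partial>N) - (\<integral>z. err_weight P S T z * cond_exp P z \<partial>N)"
proof -
  have u: "cellwise_const P (\<lambda>z. of_bool (cond_exp P z \<le> 1) :: real)"
    by (rule cellwise_const_comp[OF cellwise_const_cond_exp[OF P]])
  have int: "integrable N (\<lambda>z. err_weight P S T z * h z)" if "integrable N h" for h
    using cellwise_const_mult_integral(1)[OF P u integrable_mult_indicator[OF ST that]]
    unfolding err_weight_def by (simp add: mult.assoc)
  show gf: "integrable N (\<lambda>z. err_weight P S T z * f z)"
    by (rule int[OF integrable_f])
  show gx: "integrable N (\<lambda>z. err_weight P S T z * cond_exp P z)"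
    by (rule int[OF integrable_cond_exp[OF P]])
  have "trunc_err_integral P S T = (\<integral>z. err_weight P S T z * f z - err_weight P S T z * cond_exp P z \<partial>N)"
    unfolding trunc_err_integral_def err_weight_def trunc_err_eq
    by (intro Bochner_Integration.integral_cong) (simp_all add: indicator_times algebra_simps)
  then show "trunc_err_integral P S T =
      (\<integral>z. err_weight P S T z * f z \<partial>N) - (\<integral>z. err_weight P S T z * cond_exp P z \<partial>N)"
    using gf gx by simp
qed

lemma abs_trunc_err_integral_le_1:
  assumes P: "meas_partition M P" and ST: "S \<times> T \<in> sets N"
  shows "\<bar>trunc_err_integral P S T\<bar> \<le> 1"
proof -
  let ?u = "\<lambda>z. of_bool (cond_exp P z \<le> 1) :: real"
  let ?g = "err_weight P S T"
  have u: "cellwise_const P ?u" by (rule cellwise_const_comp[OF cellwise_const_cond_exp[OF P]])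
  note g = trunc_err_integral_eq_diff[OF P ST]
  have uf: "integrable N (\<lambda>z. ?u z * f z)" and ux: "integrable N (\<lambda>z. ?u z * cond_exp P z)"
    by (rule cellwise_const_mult_integral(1)[OF P u integrable_f],
        rule integrable_cellwise_const[OF P cellwise_const_comp2[OF u cellwise_const_cond_exp[OF P]]])
  have "0 \<le> (\<integral>z. ?g z * f z \<partial>N)" "(\<integral>z. ?g z * f z \<partial>N) \<le> (\<integral>z. ?u z * f z \<partial>N)"
    using f_nonneg g(1) uf
    by (auto intro!: Bochner_Integration.integral_nonneg Bochner_Integration.integral_mono
        simp: err_weight_def indicator_def)
  moreover have "0 \<le> (\<integral>z. ?g z * cond_exp P z \<partial>N)"
    "(\<integral>z. ?g z * cond_exp P z \<partial>N) \<le> (\<integral>z. ?u z * cond_exp P z \<partial>N)"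
    using cond_exp_nonneg g(2) ux
    by (auto intro!: Bochner_Integration.integral_nonneg Bochner_Integration.integral_mono
        simp: err_weight_def indicator_def)
  moreover have "(\<integral>z. ?u z * f z \<partial>N) = (\<integral>z. ?u z * cond_exp P z \<partial>N)"
    by (rule integral_mult_cond_exp[OF P u, symmetric])
  moreover have "(\<integral>z. ?u z * cond_exp P z \<partial>N) \<le> (\<integral>z. 1 \<partial>N)"
    using ux by (intro Bochner_Integration.integral_mono) auto
  ultimately show ?thesis unfolding g(3) by (simp add: N.prob_space)
qed

lemma trunc_err_integral_refines:
  assumes P: "meas_partition M P" and Q: "meas_partition M Q" and QP: "refines Q P"
    and ST: "S \<times> T \<in> sets N" and STQ: "cellwise_const Q (indicator (S \<times> T) :: 'a \<times> 'a \<Rightarrow> real)"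
  shows "cellwise_const Q (err_weight P S T)"
    and "trunc_err_integral P S T = (\<integral>z. err_weight P S T z * (cond_exp Q z - cond_exp P z) \<partial>N)"
proof -
  note diff = trunc_err_integral_eq_diff[OF P ST]
  have "cellwise_const Q (\<lambda>z. of_bool (cond_exp P z \<le> 1) :: real)"
    by (rule cellwise_const_refines[OF QP cellwise_const_comp[OF cellwise_const_cond_exp[OF P]]])
  then show gQ: "cellwise_const Q (err_weight P S T)"
    using cellwise_const_comp2[OF _ STQ, of _ times] unfolding err_weight_def by blast
  have "(\<integral>z. err_weight P S T z * f z \<partial>N) = (\<integral>z. err_weight P S T z * cond_exp Q z \<partial>N)"
    by (rule integral_mult_cond_exp[OF Q gQ, symmetric])
  moreover have "integrable N (\<lambda>z. err_weight P S T z * cond_exp Q z)"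
    by (rule integrable_cellwise_const[OF Q cellwise_const_comp2[OF gQ cellwise_const_cond_exp[OF Q]]])
  ultimately show "trunc_err_integral P S T = (\<integral>z. err_weight P S T z * (cond_exp Q z - cond_exp P z) \<partial>N)"
    unfolding diff(3) using diff(2) by (simp add: right_diff_distrib)
qed

lemma energy_increment:
  assumes P: "meas_partition M P" and Q: "meas_partition M Q" and QP: "refines Q P"
    and ST: "S \<times> T \<in> sets N" and STQ: "cellwise_const Q (indicator (S \<times> T) :: 'a \<times> 'a \<Rightarrow> real)"
    and e: "0 < e" "e < \<bar>trunc_err_integral P S T\<bar>"
  shows "energy P + 3 / 4 * e\<^sup>2 \<le> energy Q"
proof -
  define x where "x = cond_exp P"
  define y where "y = cond_exp Q"
  define V where "V = trunc_err_integral P S T"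
  define G where "G = (\<lambda>z. sgn V * err_weight P S T z)"
  note refine = trunc_err_integral_refines[OF P Q QP ST STQ]
  have e1: "e \<le> 1" using abs_trunc_err_integral_le_1[OF P ST] e(2) by simp
  have xQ: "cellwise_const Q x" and yQ: "cellwise_const Q y"
    unfolding x_def y_def
    by (rule cellwise_const_refines[OF QP cellwise_const_cond_exp[OF P]], rule cellwise_const_cond_exp[OF Q])
  have GQ: "cellwise_const Q G"
    unfolding G_def by (rule cellwise_const_comp[OF refine(1)])
  have int: "integrable N (\<lambda>z. h (G z) (x z) (y z))" for h :: "real \<Rightarrow> real \<Rightarrow> real \<Rightarrow> real"
    by (rule integrable_cellwise_const[OF Q cellwise_const_comp3[OF GQ xQ yQ]])
  have "e * (G z * (y z - x z)) - e\<^sup>2 / 4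
      \<le> trunc_sq (y z) - trunc_sq (x z) - trunc_sq_deriv (x z) * (y z - x z)" for z
    by (rule trunc_sq_bregman_ge_linear[OF e(1) e1])
      (auto simp: G_def err_weight_def x_def abs_mult indicator_def)
  then have "(\<integral>z. e * (G z * (y z - x z)) - e\<^sup>2 / 4 \<partial>N) \<le> energy Q - energy P"
    unfolding energy_diff_eq[OF P Q QP] x_def[symmetric] y_def[symmetric]
    by (intro Bochner_Integration.integral_mono int[of "\<lambda>g u v. e * (g * (v - u)) - e\<^sup>2 / 4"]
        int[of "\<lambda>g u v. trunc_sq v - trunc_sq u - trunc_sq_deriv u * (v - u)"])
  moreover have "(\<integral>z. G z * (y z - x z) \<partial>N) = sgn V * V"
    unfolding V_def refine(2) G_def x_def y_def by (simp add: mult.assoc)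
  then have "(\<integral>z. e * (G z * (y z - x z)) - e\<^sup>2 / 4 \<partial>N) = e * \<bar>V\<bar> - e\<^sup>2 / 4"
    using int[of "\<lambda>g u v. g * (v - u)"] by (simp add: N.prob_space sgn_if)
  moreover have "e * e < e * \<bar>V\<bar>" using e unfolding V_def by simp
  ultimately show ?thesis by (simp add: power2_eq_square)
qed

lemma exists_energy_increment:
  assumes P: "meas_partition M P" and e: "0 < e" and bad: "e < cut_norm M (trunc_err M P f)"
  shows "\<exists>Q. meas_partition M Q \<and> card Q \<le> 4 * card P \<and> energy P + 3 / 4 * e\<^sup>2 \<le> energy Q"
proof -
  obtain S T where S: "S \<in> sets M" and T: "T \<in> sets M" and V: "e < \<bar>trunc_err_integral P S T\<bar>"
    using bad unfolding trunc_err_integral_def by (rule cut_norm_gtE)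
  note Q = split_by_rectangle[OF P S T]
  have "energy P + 3 / 4 * e\<^sup>2 \<le> energy (split_by (split_by P S) T)"
    using S T by (intro energy_increment[OF P Q(1,3) _ Q(4) e V]) simp
  then show ?thesis using Q(1,2) by blast
qed

lemma energy_increment_iteration:
  assumes e: "0 < e"
  shows "\<exists>P j. meas_partition M P \<and> real (card P) \<le> 4 ^ j \<and> real j * (3 / 4 * e\<^sup>2) \<le> energy P
    \<and> (cut_norm M (trunc_err M P f) \<le> e \<or> k \<le> j)"
proof (induction k)
  case 0
  show ?case
    by (intro exI[of _ "{space M}"] exI[of _ 0])
      (simp add: meas_partition_space[OF prob_space_axioms] energy_nonneg)
next
  case (Suc k)
  then obtain P j where P: "meas_partition M P" and card: "real (card P) \<le> 4 ^ j"
    and energy: "real j * (3 / 4 * e\<^sup>2) \<le> energy P"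
    and stop: "cut_norm M (trunc_err M P f) \<le> e \<or> k \<le> j"
    by blast
  show ?case
  proof (cases "cut_norm M (trunc_err M P f) \<le> e \<or> Suc k \<le> j")
    case True
    then show ?thesis using P card energy by blast
  next
    case False
    then have "j = k" "e < cut_norm M (trunc_err M P f)" using stop by auto
    obtain Q where Q: "meas_partition M Q" and card_Q: "card Q \<le> 4 * card P"
      and energy_Q: "energy P + 3 / 4 * e\<^sup>2 \<le> energy Q"
      using exists_energy_increment[OF P e \<open>e < cut_norm M (trunc_err M P f)\<close>] by blast
    have "real (card Q) \<le> 4 * real (card P)" using of_nat_mono[OF card_Q] by simp
    also have "\<dots> \<le> 4 * 4 ^ j" using card by linarith
    finally have "real (card Q) \<le> 4 ^ Suc j" by simp
    moreover have "real (Suc j) * (3 / 4 * e\<^sup>2) \<le> energy Q" using energy energy_Q by (simp add: algebra_simps)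
    ultimately show ?thesis using Q \<open>j = k\<close> by blast
  qed
qed

lemma exists_regular_partition:
  assumes e: "0 < e"
  shows "\<exists>P. meas_partition M P \<and> real (card P) \<le> 2 powr (32 * (\<integral>z. f z \<partial>N) / e\<^sup>2)
    \<and> cut_norm M (trunc_err M P f) \<le> e"
proof -
  define E where "E = (\<integral>z. f z \<partial>N)"
  have E: "0 \<le> E" unfolding E_def using f_nonneg by (intro Bochner_Integration.integral_nonneg) auto
  obtain P j where P: "meas_partition M P" and card: "real (card P) \<le> 4 ^ j"
    and energy: "real j * (3 / 4 * e\<^sup>2) \<le> energy P"
    and stop: "cut_norm M (trunc_err M P f) \<le> e \<or> nat \<lfloor>16 * E / (3 * e\<^sup>2)\<rfloor> + 1 \<le> j"
    using energy_increment_iteration[OF e] by blast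
  have "real j * (3 / 4 * e\<^sup>2) \<le> 4 * E" using energy energy_le[OF P] unfolding E_def by simp
  then have j: "real j \<le> 16 * E / (3 * e\<^sup>2)" using e by (simp add: field_simps)
  then have "cut_norm M (trunc_err M P f) \<le> e" using stop by linarith
  moreover have "real (2 * j) \<le> 32 * E / e\<^sup>2"
  proof -
    have "real (2 * j) \<le> 32 / 3 * (E / e\<^sup>2)" using j by simp
    also have "\<dots> \<le> 32 * (E / e\<^sup>2)" using E by (intro mult_right_mono) auto
    finally show ?thesis by simp
  qed
  then have "real (card P) \<le> 2 powr (32 * E / e\<^sup>2)"
  proof -
    have "real (card P) \<le> 2 ^ (2 * j)" using card by (simp add: power_mult)
    also have "\<dots> = 2 powr real (2 * j)" by (rule powr_realpow[symmetric]) simp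
    also have "\<dots> \<le> 2 powr (32 * E / e\<^sup>2)" by (rule powr_mono) (fact, simp)
    finally show ?thesis .
  qed
  ultimately show ?thesis using P unfolding E_def by blast
qed

end

lemma trunc_err_trivial_partition:
  assumes M: "prob_space M" and E: "expect2 M f = \<infinity>" and z: "z \<in> space (M \<Otimes>\<^sub>M M)"
  shows "trunc_err M {space M} f z = 0"
proof -
  have part: "part_of {space M} x = space M" if "x \<in> space M" for x
    using part_of_eq[OF meas_partition_space[OF M] _ that] by simp
  have "(\<integral>\<^sup>+ w. ennreal (f w) * indicator (space M \<times> space M) w \<partial>(M \<Otimes>\<^sub>M M)) = expect2 M f"
    unfolding expect2_def by (intro nn_integral_cong) (auto simp: space_pair_measure)
  then have "step_fun M {space M} f z = \<infinity>"
    using z E prob_space.emeasure_space_1[OF M]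
    by (simp add: step_fun_def Let_def part space_pair_measure mem_Times_iff ennreal_top_divide)
  then show ?thesis unfolding trunc_err_def by (simp add: top_unique)
qed

theorem theorem2p2:
  fixes M :: "'a measure" and f :: "'a \<times> 'a \<Rightarrow> real" and \<epsilon> :: real
  assumes "\<epsilon> > 0"
    and "prob_space M"
    and "f \<in> borel_measurable (M \<Otimes>\<^sub>M M)"
    and "\<forall>x\<in>space M. \<forall>y\<in>space M. f (x, y) \<ge> 0"
    and "\<forall>x\<in>space M. \<forall>y\<in>space M. f (x, y) = f (y, x)"
  shows "\<exists>P. meas_partition M P
    \<and> (expect2 M f \<noteq> \<infinity> \<longrightarrow> real (card P) \<le> 2 powr (32 * enn2real (expect2 M f) / \<epsilon>\<^sup>2))
    \<and> cut_norm M (trunc_err M P f) \<le> \<epsilon>"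
proof -
  have f_nonneg: "\<And>z. z \<in> space (M \<Otimes>\<^sub>M M) \<Longrightarrow> 0 \<le> f z"
    using assms(4) by (auto simp: space_pair_measure)
  show ?thesis
  proof (cases "expect2 M f = \<infinity>")
    case True
    then have "cut_norm M (trunc_err M {space M} f) = 0"
      by (intro cut_norm_eq_0 trunc_err_trivial_partition assms(2))
    then show ?thesis using meas_partition_space[OF assms(2)] True assms(1) by auto
  next
    case False
    then have "integrable (M \<Otimes>\<^sub>M M) f"
      using assms(3) f_nonneg unfolding expect2_def by (intro integrableI_nonneg) (auto simp: less_top)
    then interpret integrable_kernel M f
      using assms(2) f_nonneg by (intro integrable_kernel.intro prob_square.intro integrable_kernel_axioms.intro)
    have "enn2real (expect2 M f) = (\<integral>z. f z \<partial>(M \<Otimes>\<^sub>M M))"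
      unfolding expect2_def using assms(3) f_nonneg by (intro integral_eq_nn_integral[symmetric]) auto
    then show ?thesis using exists_regular_partition[OF assms(1)] by auto
  qed
qed

end
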